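(* Let $\sigma\in\Omega_L$ satisfy $N(\sigma)\le n_0(n_0+1)+1$, and let $\sigma^o$ be the configuration obtained from $\sigma$ by replacing every spin equal to $+1$ by $0$, i.e. $\sigma^o(x)=\min\{\sigma(x),0\}$. Then $\mathbb H(\sigma^o)\le\mathbb H(\sigma)$.
   Context: Fix $h\in(0,1)$ with $2/h\notin\mathbb Z$, $n_0=\lfloor 2/h\rfloor$. $\Lambda_L$ is the two-dimensional discrete torus of side $L$, with $L\ge n_0(n_0+1)+2$, and $\Omega_L=\{-1,0,1\}^{\Lambda_L}$. Hamiltonian $\mathbb H(\sigma)=\sum(\sigma(y)-\sigma(x))^2-h\sum_{x\in\Lambda_L}\sigma(x)$, the first sum over unordered nearest-neighbour pairs $\{x,y\}$. $N(\sigma)=\#\{x\in\Lambda_L:\sigma(x)\ne-1\}$. *)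

theory Defs
  imports Complex_Main
begin

definition torus :: "nat \<Rightarrow> (nat \<times> nat) set" where
  "torus L = {0..<L} \<times> {0..<L}"

definition Omega :: "nat \<Rightarrow> ((nat \<times> nat) \<Rightarrow> int) set" where
  "Omega L = {\<sigma>. \<forall>x\<in>torus L. \<sigma> x \<in> {-1, 0, 1}}"

definition nn_edges :: "nat \<Rightarrow> (nat \<times> nat) set set" where
  "nn_edges L = {{x, y} | x y. x \<in> torus L \<and> y \<in> torus L \<and>
      (y = ((fst x + 1) mod L, snd x) \<or> y = (fst x, (snd x + 1) mod L))}"

text \<open>Hamiltonian: sum over unordered nn pairs {x,y} of (sigma y - sigma x)^2 minus h times magnetisation.\<close>
definition H :: "nat \<Rightarrow> real \<Rightarrow> ((nat \<times> nat) \<Rightarrow> int) \<Rightarrow> real" where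
  "H L h \<sigma> = (\<Sum>e\<in>nn_edges L. (\<Sum>x\<in>e. \<Sum>y\<in>e. real_of_int ((\<sigma> y - \<sigma> x)^2)) / 2)
              - h * (\<Sum>x\<in>torus L. real_of_int (\<sigma> x))"

definition Ncount :: "nat \<Rightarrow> ((nat \<times> nat) \<Rightarrow> int) \<Rightarrow> nat" where
  "Ncount L \<sigma> = card {x \<in> torus L. \<sigma> x \<noteq> -1}"

end

theory Submission
  imports Defs
begin

text \<open>Clipping the spins +1 to 0 lowers the magnetic term by h p, where p is the number of plus
  sites, and changes every bond energy by a nonnegative amount which is at least 1 on each bond
  joining a plus site to a non-plus site. Since there are fewer than L plus sites, no line of the
  torus is full, so every row (column) meeting the plus set contains at least two such bonds: the
  bond energy drops by at least 2 (r + c), where r and c count the rows and columns met. Finally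
  p \<le> r c and p \<le> (n0 + 1)^2 with h n0 \<le> 2 give (h p)^2 \<le> 9 p \<le> 16 r c \<le> (2 (r + c))^2.\<close>

definition torus_right :: "nat \<Rightarrow> nat \<times> nat \<Rightarrow> nat \<times> nat" where
  "torus_right L x = ((fst x + 1) mod L, snd x)"

definition torus_up :: "nat \<Rightarrow> nat \<times> nat \<Rightarrow> nat \<times> nat" where
  "torus_up L x = (fst x, (snd x + 1) mod L)"

definition plus_sites :: "nat \<Rightarrow> (nat \<times> nat \<Rightarrow> int) \<Rightarrow> (nat \<times> nat) set" where
  "plus_sites L \<sigma> = {x \<in> torus L. \<sigma> x = 1}"

lemma finite_torus [simp]: "finite (torus L)"
  unfolding torus_def by simp

lemma mem_torus_iff: "(a, b) \<in> torus L \<longleftrightarrow> a < L \<and> b < L"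
  unfolding torus_def by simp

lemma torus_right_in_torus: "x \<in> torus L \<Longrightarrow> torus_right L x \<in> torus L"
  unfolding torus_def torus_right_def by auto

lemma torus_up_in_torus: "x \<in> torus L \<Longrightarrow> torus_up L x \<in> torus L"
  unfolding torus_def torus_up_def by auto

lemma swap_image_torus [simp]: "prod.swap ` torus L = torus L"
  unfolding torus_def by auto

lemma torus_right_swap: "torus_right L (prod.swap x) = prod.swap (torus_up L x)"
  unfolding torus_right_def torus_up_def by simp

lemma succ_mod_neq: "(a::nat) < L \<Longrightarrow> 2 \<le> L \<Longrightarrow> (a + 1) mod L \<noteq> a"
  by (cases "a + 1 < L") (auto simp: mod_if)

lemma succ_succ_mod_neq: "(a::nat) < L \<Longrightarrow> 3 \<le> L \<Longrightarrow> ((a + 1) mod L + 1) mod L \<noteq> a"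
  by (cases "a + 2 < L"; cases "a + 1 < L") (auto simp: mod_if)

lemma nn_edges_eq:
  "nn_edges L = (\<lambda>x. {x, torus_right L x}) ` torus L \<union> (\<lambda>x. {x, torus_up L x}) ` torus L"
proof
  show "nn_edges L \<subseteq> (\<lambda>x. {x, torus_right L x}) ` torus L \<union> (\<lambda>x. {x, torus_up L x}) ` torus L"
    unfolding nn_edges_def torus_right_def torus_up_def by auto
  show "(\<lambda>x. {x, torus_right L x}) ` torus L \<union> (\<lambda>x. {x, torus_up L x}) ` torus L \<subseteq> nn_edges L"
    unfolding nn_edges_def
    using torus_right_in_torus torus_up_in_torus unfolding torus_right_def torus_up_def by blast
qed

lemma inj_on_right_edge:
  assumes "3 \<le> L" shows "inj_on (\<lambda>x. {x, torus_right L x}) (torus L)"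
proof (rule inj_onI, rule ccontr)
  fix x y assume x: "x \<in> torus L" and "{x, torus_right L x} = {y, torus_right L y}" "x \<noteq> y"
  then have "x = torus_right L (torus_right L x)" by (auto simp: doubleton_eq_iff)
  then have "fst x = ((fst x + 1) mod L + 1) mod L" unfolding torus_right_def by (metis fst_conv)
  moreover have "fst x < L" using x by (auto simp: torus_def)
  ultimately show False using succ_succ_mod_neq[of "fst x" L] assms by simp
qed

lemma inj_on_up_edge:
  assumes "3 \<le> L" shows "inj_on (\<lambda>x. {x, torus_up L x}) (torus L)"
proof (rule inj_onI, rule ccontr)
  fix x y assume x: "x \<in> torus L" and "{x, torus_up L x} = {y, torus_up L y}" "x \<noteq> y"
  then have "x = torus_up L (torus_up L x)" by (auto simp: doubleton_eq_iff)
  then have "snd x = ((snd x + 1) mod L + 1) mod L" unfolding torus_up_def by (metis snd_conv)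
  moreover have "snd x < L" using x by (auto simp: torus_def)
  ultimately show False using succ_succ_mod_neq[of "snd x" L] assms by simp
qed

lemma right_edges_disjoint_up_edges:
  assumes "3 \<le> L"
  shows "(\<lambda>x. {x, torus_right L x}) ` torus L \<inter> (\<lambda>x. {x, torus_up L x}) ` torus L = {}"
proof (rule ccontr)
  assume "\<not> ?thesis"
  then obtain x y where "x \<in> torus L" "y \<in> torus L" and e: "{x, torus_right L x} = {y, torus_up L y}"
    by blast
  then have xy: "snd x < L" "fst y < L" by (auto simp: torus_def)
  from e consider "x = y" "torus_right L x = torus_up L y" | "x = torus_up L y" "torus_right L x = y"
    by (auto simp: doubleton_eq_iff)
  then show False
  proof cases
    case 1
    then have "(snd x + 1) mod L = snd x" by (simp add: torus_right_def torus_up_def prod_eq_iff)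
    with succ_mod_neq[of "snd x" L] xy assms show False by simp
  next
    case 2
    then have "(fst y + 1) mod L = fst y" by (simp add: torus_right_def torus_up_def prod_eq_iff)
    with succ_mod_neq[of "fst y" L] xy assms show False by simp
  qed
qed

lemma sum_nn_edges:
  assumes "3 \<le> L"
  shows "(\<Sum>e\<in>nn_edges L. F e) = (\<Sum>x\<in>torus L. F {x, torus_right L x} + F {x, torus_up L x})"
  unfolding nn_edges_eq sum.distrib
  using sum.union_disjoint[OF _ _ right_edges_disjoint_up_edges[OF assms]]
  by (simp add: sum.reindex[OF inj_on_right_edge[OF assms]] sum.reindex[OF inj_on_up_edge[OF assms]])

lemma H_eq_site_sum:
  assumes "3 \<le> L"
  shows "H L h \<tau> = (\<Sum>x\<in>torus L. real_of_int ((\<tau> (torus_right L x) - \<tau> x)\<^sup>2 + (\<tau> (torus_up L x) - \<tau> x)\<^sup>2))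
      - h * (\<Sum>x\<in>torus L. real_of_int (\<tau> x))"
proof -
  have bond: "(\<Sum>a\<in>{x, y}. \<Sum>b\<in>{x, y}. real_of_int ((\<tau> b - \<tau> a)\<^sup>2)) / 2 = real_of_int ((\<tau> y - \<tau> x)\<^sup>2)"
    if "x \<noteq> y" for x y
    using that by (simp add: power2_commute)
  have "x \<noteq> torus_right L x" "x \<noteq> torus_up L x" if "x \<in> torus L" for x
    using that assms succ_mod_neq unfolding torus_right_def torus_up_def
    by (cases x; force simp: mem_torus_iff)+
  then show ?thesis
    unfolding H_def sum_nn_edges[OF assms] of_int_add
    by (intro arg_cong2[where f = minus] arg_cong2[where f = plus] refl sum.cong bond) auto
qed

lemma sum_torus_swap: "(\<Sum>x\<in>torus L. f (prod.swap x)) = (\<Sum>x\<in>torus L. f x)"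
  using sum.reindex[of prod.swap "torus L" f] by (simp add: comp_def)

definition bond_gain :: "int \<Rightarrow> int \<Rightarrow> int" where
  "bond_gain u v = (v - u)\<^sup>2 - (min v 0 - min u 0)\<^sup>2"

lemma bond_gain_nonneg: "u \<in> {-1, 0, 1} \<Longrightarrow> v \<in> {-1, 0, 1} \<Longrightarrow> 0 \<le> bond_gain u v"
  unfolding bond_gain_def by auto

lemma bond_gain_ge_one:
  "u \<in> {-1, 0, 1} \<Longrightarrow> v \<in> {-1, 0, 1} \<Longrightarrow> (u = 1) \<noteq> (v = 1) \<Longrightarrow> 1 \<le> bond_gain u v"
  unfolding bond_gain_def by auto

lemma H_diff_clip:
  assumes "3 \<le> L" "\<sigma> \<in> Omega L"
  shows "H L h \<sigma> - H L h (\<lambda>x. min (\<sigma> x) 0)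
    = real_of_int (\<Sum>x\<in>torus L. bond_gain (\<sigma> x) (\<sigma> (torus_right L x)))
      + real_of_int (\<Sum>x\<in>torus L. bond_gain (\<sigma> x) (\<sigma> (torus_up L x)))
      - h * real (card (plus_sites L \<sigma>))"
proof -
  let ?\<tau> = "\<lambda>x. min (\<sigma> x) 0"
  have "(\<Sum>x\<in>torus L. real_of_int (\<sigma> x)) - (\<Sum>x\<in>torus L. real_of_int (?\<tau> x))
      = (\<Sum>x\<in>torus L. of_bool (\<sigma> x = 1))"
    unfolding sum_subtractf[symmetric]
    using assms(2) unfolding Omega_def by (intro sum.cong) auto
  also have "\<dots> = real (card (plus_sites L \<sigma>))"
    by (simp add: plus_sites_def Int_def conj_commute)
  finally have magnetic: "(\<Sum>x\<in>torus L. real_of_int (\<sigma> x)) - (\<Sum>x\<in>torus L. real_of_int (?\<tau> x))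
      = real (card (plus_sites L \<sigma>))" .
  have bonds: "(\<Sum>x\<in>torus L. real_of_int ((\<sigma> (torus_right L x) - \<sigma> x)\<^sup>2 + (\<sigma> (torus_up L x) - \<sigma> x)\<^sup>2))
      - (\<Sum>x\<in>torus L. real_of_int ((?\<tau> (torus_right L x) - ?\<tau> x)\<^sup>2 + (?\<tau> (torus_up L x) - ?\<tau> x)\<^sup>2))
      = real_of_int (\<Sum>x\<in>torus L. bond_gain (\<sigma> x) (\<sigma> (torus_right L x)))
        + real_of_int (\<Sum>x\<in>torus L. bond_gain (\<sigma> x) (\<sigma> (torus_up L x)))"
    unfolding sum_subtractf[symmetric] of_int_sum sum.distrib[symmetric]
    by (intro sum.cong) (auto simp: bond_gain_def)
  show ?thesis
    using magnetic bonds unfolding H_eq_site_sum[OF assms(1)] by (simp add: algebra_simps)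
qed

section \<open>Every line meeting the plus set carries two broken bonds\<close>

lemma cyclic_exists_exit:
  fixes f :: "nat \<Rightarrow> bool"
  assumes "a0 < L" "f a0" "b0 < L" "\<not> f b0"
  shows "\<exists>a<L. f a \<and> \<not> f ((a + 1) mod L)"
proof (rule ccontr)
  assume "\<not> ?thesis"
  then have step: "a < L \<Longrightarrow> f a \<Longrightarrow> f ((a + 1) mod L)" for a by blast
  have "f ((a0 + k) mod L)" for k
  proof (induction k)
    case (Suc k)
    have "(a0 + Suc k) mod L = ((a0 + k) mod L + 1) mod L" by (simp add: mod_simps)
    with Suc step assms(1) show ?case by simp
  qed (use assms in simp)
  from this[of "b0 + L - a0"] assms show False by simp
qed

lemma cyclic_sum_ge_two:
  fixes f :: "nat \<Rightarrow> bool" and g :: "nat \<Rightarrow> int"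
  assumes nonneg: "\<And>a. a < L \<Longrightarrow> 0 \<le> g a"
    and crossing: "\<And>a. a < L \<Longrightarrow> f a \<noteq> f ((a + 1) mod L) \<Longrightarrow> 1 \<le> g a"
    and "a0 < L" "f a0" "b0 < L" "\<not> f b0"
  shows "2 \<le> (\<Sum>a<L. g a)"
proof -
  obtain a1 where a1: "a1 < L" "f a1" "\<not> f ((a1 + 1) mod L)"
    using cyclic_exists_exit[of a0 L f b0] assms by blast
  obtain a2 where a2: "a2 < L" "\<not> f a2" "f ((a2 + 1) mod L)"
    using cyclic_exists_exit[of b0 L "Not \<circ> f" a0] assms by auto
  have "a1 \<noteq> a2" using a1 a2 by auto
  then have "2 \<le> (\<Sum>a\<in>{a1, a2}. g a)"
    using a1 a2 crossing[of a1] crossing[of a2] by simp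
  also have "\<dots> \<le> (\<Sum>a<L. g a)"
    by (rule sum_mono2) (use nonneg a1 a2 in auto)
  finally show ?thesis .
qed

lemma exists_non_plus_in_row:
  assumes "card (plus_sites L \<sigma>) < L" "b < L"
  shows "\<exists>a<L. \<sigma> (a, b) \<noteq> 1"
proof (rule ccontr)
  assume "\<not> ?thesis"
  then have "(\<lambda>a. (a, b)) ` {..<L} \<subseteq> plus_sites L \<sigma>"
    using assms(2) by (auto simp: plus_sites_def mem_torus_iff)
  then have "card ((\<lambda>a. (a, b)) ` {..<L}) \<le> card (plus_sites L \<sigma>)"
    by (rule card_mono[rotated]) (simp add: plus_sites_def)
  with assms(1) show False by (simp add: card_image inj_on_def)
qed

lemma rows_gain:
  assumes "\<sigma> \<in> Omega L" "card (plus_sites L \<sigma>) < L"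
  shows "2 * int (card (snd ` plus_sites L \<sigma>)) \<le> (\<Sum>x\<in>torus L. bond_gain (\<sigma> x) (\<sigma> (torus_right L x)))"
proof -
  define g where "g a b = bond_gain (\<sigma> (a, b)) (\<sigma> ((a + 1) mod L, b))" for a b
  have spin: "\<sigma> (a, b) \<in> {-1, 0, 1}" if "a < L" "b < L" for a b
    using assms(1) that by (simp add: Omega_def mem_torus_iff)
  have nonneg: "0 \<le> g a b" if "a < L" "b < L" for a b
    unfolding g_def using that by (intro bond_gain_nonneg spin) auto
  have row: "2 \<le> (\<Sum>a<L. g a b)" if b: "b \<in> snd ` plus_sites L \<sigma>" for b
  proof -
    obtain a0 where "a0 < L" "\<sigma> (a0, b) = 1" "b < L"
      using b by (force simp: plus_sites_def torus_def)
    moreover obtain b0 where "b0 < L" "\<sigma> (b0, b) \<noteq> 1"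
      using exists_non_plus_in_row[OF assms(2) \<open>b < L\<close>] by blast
    moreover have "1 \<le> g a b" if "a < L" "(\<sigma> (a, b) = 1) \<noteq> (\<sigma> ((a + 1) mod L, b) = 1)" for a
      unfolding g_def using that \<open>b < L\<close> by (intro bond_gain_ge_one spin) auto
    ultimately show ?thesis
      using nonneg by (intro cyclic_sum_ge_two[where f = "\<lambda>a. \<sigma> (a, b) = 1"]) auto
  qed
  have rows_sub: "snd ` plus_sites L \<sigma> \<subseteq> {..<L}"
    by (auto simp: plus_sites_def torus_def)
  have "2 * int (card (snd ` plus_sites L \<sigma>)) = (\<Sum>b\<in>snd ` plus_sites L \<sigma>. 2)"
    by simp
  also have "\<dots> \<le> (\<Sum>b\<in>snd ` plus_sites L \<sigma>. \<Sum>a<L. g a b)"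
    by (rule sum_mono) (rule row)
  also have "\<dots> \<le> (\<Sum>b<L. \<Sum>a<L. g a b)"
    using rows_sub nonneg by (intro sum_mono2 sum_nonneg) auto
  also have "\<dots> = (\<Sum>x\<in>torus L. bond_gain (\<sigma> x) (\<sigma> (torus_right L x)))"
    unfolding torus_def lessThan_atLeast0 sum.cartesian_product' g_def torus_right_def
    by (subst sum.swap) simp
  finally show ?thesis .
qed

lemma columns_gain:
  assumes "\<sigma> \<in> Omega L" "card (plus_sites L \<sigma>) < L"
  shows "2 * int (card (fst ` plus_sites L \<sigma>)) \<le> (\<Sum>x\<in>torus L. bond_gain (\<sigma> x) (\<sigma> (torus_up L x)))"
proof -
  define \<sigma>' where "\<sigma>' = \<sigma> \<circ> prod.swap"
  have plus': "plus_sites L \<sigma>' = prod.swap ` plus_sites L \<sigma>"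
    unfolding plus_sites_def \<sigma>'_def by (auto simp: torus_def)
  have "\<sigma>' \<in> Omega L"
    using assms(1) by (auto simp: Omega_def \<sigma>'_def torus_def)
  moreover have "card (plus_sites L \<sigma>') < L"
    using assms(2) by (simp add: plus' card_image)
  ultimately have "2 * int (card (snd ` plus_sites L \<sigma>')) \<le> (\<Sum>x\<in>torus L. bond_gain (\<sigma>' x) (\<sigma>' (torus_right L x)))"
    by (rule rows_gain)
  also have "\<dots> = (\<Sum>x\<in>torus L. bond_gain (\<sigma> x) (\<sigma> (torus_up L x)))"
    using sum_torus_swap[of "\<lambda>x. bond_gain (\<sigma>' x) (\<sigma>' (torus_right L x))" L]
    by (simp add: \<sigma>'_def torus_right_swap)
  finally show ?thesis
    by (simp add: plus' image_image)
qed

lemma magnetic_loss_le_perimeter: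
  fixes h :: real and p r c n0 :: nat
  assumes "0 < h" "h < 1" "real n0 \<le> 2 / h" "p \<le> n0 * (n0 + 1) + 1" "p \<le> r * c"
  shows "h * real p \<le> 2 * (real r + real c)"
proof -
  have "h * real n0 \<le> 2"
    using assms(1,3) by (simp add: pos_le_divide_eq mult.commute)
  then have hn: "0 \<le> h * (real n0 + 1)" "h * (real n0 + 1) \<le> 3"
    using assms(1,2) by (auto simp: algebra_simps)
  have "real p \<le> (real n0 + 1)\<^sup>2"
    using assms(4) of_nat_mono[OF assms(4), where 'a = real] by (simp add: power2_eq_square algebra_simps)
  then have "h\<^sup>2 * real p \<le> (h * (real n0 + 1))\<^sup>2"
    by (simp add: power_mult_distrib mult_left_mono)
  also have "\<dots> \<le> 3\<^sup>2"
    using hn by (intro power_mono) auto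
  finally have "h\<^sup>2 * real p \<le> 9" by simp
  then have "(h\<^sup>2 * real p) * real p \<le> 9 * real p"
    by (rule mult_right_mono) simp
  then have "(h * real p)\<^sup>2 \<le> 9 * real p"
    by (simp add: power2_eq_square mult_ac)
  also have "\<dots> \<le> 16 * (real r * real c)"
    using of_nat_mono[OF assms(5), where 'a = real] by simp
  also have "\<dots> \<le> (2 * (real r + real c))\<^sup>2"
    using sum_squares_ge_zero[of "real r - real c" 0] by (simp add: power2_eq_square algebra_simps)
  finally show ?thesis
    by (rule power2_le_imp_le) simp
qed

theorem mainTheorem20:
  fixes h :: real and L :: nat and \<sigma> :: "(nat \<times> nat) \<Rightarrow> int"
  assumes "0 < h" "h < 1"
    and "2 / h \<notin> \<int>"
    and "L \<ge> nat \<lfloor>2 / h\<rfloor> * (nat \<lfloor>2 / h\<rfloor> + 1) + 2"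
    and "\<sigma> \<in> Omega L"
    and "Ncount L \<sigma> \<le> nat \<lfloor>2 / h\<rfloor> * (nat \<lfloor>2 / h\<rfloor> + 1) + 1"
  shows "H L h (\<lambda>x. min (\<sigma> x) 0) \<le> H L h \<sigma>"
proof -
  define n0 where "n0 = nat \<lfloor>2 / h\<rfloor>"
  define P where "P = plus_sites L \<sigma>"
  have "2 \<le> \<lfloor>2 / h\<rfloor>"
    using assms(1,2) by (simp add: le_floor_iff le_divide_eq)
  then have n0: "2 \<le> n0" "real n0 \<le> 2 / h"
    unfolding n0_def by linarith+
  have "card P \<le> Ncount L \<sigma>"
    unfolding P_def plus_sites_def Ncount_def by (rule card_mono) auto
  then have P_le: "card P \<le> n0 * (n0 + 1) + 1"
    using assms(6) unfolding n0_def by linarith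
  have "2 * 3 \<le> n0 * (n0 + 1)"
    using n0 by (intro mult_le_mono) auto
  then have L: "3 \<le> L" "card P < L"
    using assms(4) P_le unfolding n0_def by linarith+
  have "card P \<le> card (fst ` P) * card (snd ` P)"
    using card_mono[of "fst ` P \<times> snd ` P" P]
    by (force simp: P_def plus_sites_def card_cartesian_product)
  then have "h * real (card P) \<le> 2 * (real (card (fst ` P)) + real (card (snd ` P)))"
    using magnetic_loss_le_perimeter[OF assms(1,2) n0(2) P_le] by blast
  also have "\<dots> = real_of_int (2 * int (card (snd ` P)) + 2 * int (card (fst ` P)))"
    by simp
  also have "\<dots> \<le> real_of_int ((\<Sum>x\<in>torus L. bond_gain (\<sigma> x) (\<sigma> (torus_right L x)))
      + (\<Sum>x\<in>torus L. bond_gain (\<sigma> x) (\<sigma> (torus_up L x))))"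
    unfolding of_int_le_iff P_def
    using rows_gain columns_gain assms(5) L(2)[unfolded P_def] by (intro add_mono)
  finally show ?thesis
    using H_diff_clip[OF L(1) assms(5), of h] unfolding P_def by simp
qed

end
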